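(* Let $\sigma$ and $\phi$ be two permutations of $\{1,\dots,n\}$, let $S\subseteq\{1,\dots,n\}$, and let $\theta$ be defined by $\theta(a)=\sigma(a)$ if $a\in S$ and $\theta(a)=\phi(a)$ if $a\notin S$. Then $\theta$ is a permutation if and only if $S$ is stable by $\phi^{-1}\sigma$. Moreover, in that case $\theta_{|S}=\phi_{|S}(\phi^{-1}\sigma)_{|S}$.
   Context: Permutations compose right to left ($(\phi^{-1}\sigma)(a)=\phi^{-1}(\sigma(a))$). For a permutation $\pi$ of a set $H$ and $S\subseteq H$, the restriction $\pi_{|S}$ is the permutation of $S$ whose cycles are obtained from those of $\pi$ by erasing the elements not in $S$; equivalently $\pi_{|S}(s)=\pi^k(s)$ where $k\ge1$ is least with $\pi^k(s)\in S$. *)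

theory Defs
  imports "HOL-Combinatorics.Permutations"
begin

text \<open>Restriction of a permutation pi to a set S: erase from the cycles of pi the
elements not in S, i.e. for s in S, the result is pi^k s with k >= 1 least such that
pi^k s is in S; elements outside S are fixed.\<close>
definition perm_restrict :: "('a \<Rightarrow> 'a) \<Rightarrow> 'a set \<Rightarrow> 'a \<Rightarrow> 'a" where
  "perm_restrict \<pi> S = (\<lambda>s. if s \<in> S then (\<pi> ^^ (LEAST k. 0 < k \<and> (\<pi> ^^ k) s \<in> S)) s else s)"

end

theory Submission
  imports Defs
begin

text \<open>Write \<open>\<psi> = \<phi>\<inverse>\<sigma>\<close>, so that \<open>\<theta> a = \<theta> b\<close> with \<open>a \<in> S\<close>, \<open>b \<notin> S\<close> means exactly \<open>\<psi> a = b\<close>.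
  Hence \<open>\<theta>\<close> is injective iff \<open>\<psi>\<close> never leaves \<open>S\<close>, and on a finite set injectivity is
  bijectivity. For the restriction formula, start at \<open>x \<in> S\<close>: \<open>\<theta>\<close> first moves \<open>x\<close> to
  \<open>\<phi> (\<psi> x)\<close> with \<open>\<psi> x \<in> S\<close>, and then agrees with \<open>\<phi>\<close> as long as the orbit stays outside \<open>S\<close>;
  so the first return of \<open>x\<close> to \<open>S\<close> under \<open>\<theta>\<close> is the first return of \<open>\<psi> x\<close> under \<open>\<phi>\<close>.\<close>

lemma piecewise_permutes_iff:
  assumes "finite A" and \<sigma>: "\<sigma> permutes A" and \<phi>: "\<phi> permutes A" and "S \<subseteq> A"
  shows "(\<lambda>a. if a \<in> S then \<sigma> a else \<phi> a) permutes A \<longleftrightarrow> (inv \<phi> \<circ> \<sigma>) ` S \<subseteq> S"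
    (is "?\<theta> permutes A \<longleftrightarrow> _")
proof
  assume "?\<theta> permutes A"
  then have inj: "inj ?\<theta>" by (rule permutes_inj)
  show "(inv \<phi> \<circ> \<sigma>) ` S \<subseteq> S"
  proof (rule ccontr)
    assume "\<not> (inv \<phi> \<circ> \<sigma>) ` S \<subseteq> S"
    then obtain a where a: "a \<in> S" "inv \<phi> (\<sigma> a) \<notin> S" by auto
    then have "?\<theta> (inv \<phi> (\<sigma> a)) = ?\<theta> a"
      by (simp add: permutes_inverses(1)[OF \<phi>])
    then have "inv \<phi> (\<sigma> a) = a" by (rule injD[OF inj])
    with a show False by simp
  qed
next
  assume stable: "(inv \<phi> \<circ> \<sigma>) ` S \<subseteq> S"
  have cross: "?\<theta> a \<noteq> ?\<theta> b" if "a \<in> S" "b \<notin> S" for a b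
  proof
    assume "?\<theta> a = ?\<theta> b"
    with that have "inv \<phi> (\<sigma> a) = b" by (simp add: permutes_inv_eq[OF \<phi>])
    with that stable show False by auto
  qed
  have inj: "inj_on ?\<theta> A"
  proof (rule inj_onI)
    fix a b assume "a \<in> A" "b \<in> A" and eq: "?\<theta> a = ?\<theta> b"
    show "a = b"
    proof (cases "a \<in> S"; cases "b \<in> S")
      assume "a \<in> S" "b \<in> S"
      with eq show ?thesis by (simp add: permutes_inj[OF \<sigma>, THEN inj_eq])
    next
      assume "a \<notin> S" "b \<notin> S"
      with eq show ?thesis by (simp add: permutes_inj[OF \<phi>, THEN inj_eq])
    qed (use cross eq in metis)+
  qed
  have img: "?\<theta> ` A \<subseteq> A"
    using \<open>S \<subseteq> A\<close> permutes_in_image[OF \<sigma>] permutes_in_image[OF \<phi>] by auto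
  have "bij_betw ?\<theta> A A"
    unfolding bij_betw_def using inj endo_inj_surj[OF \<open>finite A\<close> img inj] by blast
  moreover have "?\<theta> x = x" if "x \<notin> A" for x
    using that \<open>S \<subseteq> A\<close> permutes_not_in[OF \<phi>] by auto
  ultimately show "?\<theta> permutes A" by (rule bij_imp_permutes)
qed

lemma perm_restrict_eq_first_return:
  assumes "s \<in> S" and "0 < m" and "(\<pi> ^^ m) s \<in> S"
    and "\<And>k. 0 < k \<Longrightarrow> k < m \<Longrightarrow> (\<pi> ^^ k) s \<notin> S"
  shows "perm_restrict \<pi> S s = (\<pi> ^^ m) s"
proof -
  have "(LEAST k. 0 < k \<and> (\<pi> ^^ k) s \<in> S) = m"
    by (rule Least_equality) (use assms not_less in blast)+
  with \<open>s \<in> S\<close> show ?thesis by (simp add: perm_restrict_def)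
qed

lemma permutation_first_return:
  assumes "permutation \<pi>" and "s \<in> S"
  obtains m where "0 < m" and "(\<pi> ^^ m) s \<in> S"
    and "\<And>k. 0 < k \<Longrightarrow> k < m \<Longrightarrow> (\<pi> ^^ k) s \<notin> S"
proof -
  obtain m0 where "0 < m0" "(\<pi> ^^ m0) s = s"
    using permutation_self[OF assms(1)] by blast
  with \<open>s \<in> S\<close> have ex: "\<exists>m. 0 < m \<and> (\<pi> ^^ m) s \<in> S" by auto
  define m where "m = (LEAST m. 0 < m \<and> (\<pi> ^^ m) s \<in> S)"
  show thesis
  proof
    show "0 < m" "(\<pi> ^^ m) s \<in> S"
      using LeastI_ex[OF ex] unfolding m_def by auto
    show "(\<pi> ^^ k) s \<notin> S" if "0 < k" "k < m" for k
      using not_less_Least[of k "\<lambda>m. 0 < m \<and> (\<pi> ^^ m) s \<in> S"] that unfolding m_def by blast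
  qed
qed

lemma funpow_Suc_eq_along_orbit:
  assumes "f x = g y" and "\<And>j. 0 < j \<Longrightarrow> j < m \<Longrightarrow> f ((g ^^ j) y) = g ((g ^^ j) y)"
    and "Suc k \<le> m"
  shows "(f ^^ Suc k) x = (g ^^ Suc k) y"
  using \<open>Suc k \<le> m\<close>
proof (induction k)
  case 0
  with assms(1) show ?case by simp
next
  case (Suc k)
  then have "(f ^^ Suc (Suc k)) x = f ((g ^^ Suc k) y)" by simp
  also have "\<dots> = g ((g ^^ Suc k) y)" by (rule assms(2)) (use Suc.prems in auto)
  finally show ?case by simp
qed

lemma perm_restrict_piecewise:
  assumes \<phi>: "permutation \<phi>" and stable: "(inv \<phi> \<circ> \<sigma>) ` S \<subseteq> S"
  shows "perm_restrict (\<lambda>a. if a \<in> S then \<sigma> a else \<phi> a) S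
           = perm_restrict \<phi> S \<circ> perm_restrict (inv \<phi> \<circ> \<sigma>) S"
    (is "perm_restrict ?\<theta> S = _")
proof
  fix x
  show "perm_restrict ?\<theta> S x = (perm_restrict \<phi> S \<circ> perm_restrict (inv \<phi> \<circ> \<sigma>) S) x"
  proof (cases "x \<in> S")
    case False
    then show ?thesis by (simp add: perm_restrict_def)
  next
    case True
    define t where "t = inv \<phi> (\<sigma> x)"
    have "t \<in> S" using stable True unfolding t_def by auto
    have restrict_\<psi>: "perm_restrict (inv \<phi> \<circ> \<sigma>) S x = t"
      using perm_restrict_eq_first_return[of x S 1] True \<open>t \<in> S\<close> by (simp add: t_def)
    obtain m where m: "0 < m" "(\<phi> ^^ m) t \<in> S"
      and outside: "\<And>k. 0 < k \<Longrightarrow> k < m \<Longrightarrow> (\<phi> ^^ k) t \<notin> S"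
      using permutation_first_return[OF \<phi> \<open>t \<in> S\<close>] by blast
    have "?\<theta> x = \<phi> t"
      using True surj_f_inv_f[OF bij_is_surj[OF permutation_bijective[OF \<phi>]]]
      by (simp add: t_def)
    then have orbit: "(?\<theta> ^^ k) x = (\<phi> ^^ k) t" if "0 < k" "k \<le> m" for k
      using funpow_Suc_eq_along_orbit[of ?\<theta> x \<phi> t m "k - 1"] outside that by simp
    have "perm_restrict ?\<theta> S x = (?\<theta> ^^ m) x"
      by (rule perm_restrict_eq_first_return) (use True m orbit outside in auto)
    also have "\<dots> = perm_restrict \<phi> S t"
      using orbit[of m] perm_restrict_eq_first_return[OF \<open>t \<in> S\<close> m outside] m by simp
    finally show ?thesis using restrict_\<psi> by simp
  qed
qed

theorem mainTheorem6:
  fixes \<sigma> \<phi> :: "nat \<Rightarrow> nat" and n :: nat and S :: "nat set"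
  assumes "\<sigma> permutes {1..n}" and "\<phi> permutes {1..n}" and "S \<subseteq> {1..n}"
  defines "\<theta> \<equiv> (\<lambda>a. if a \<in> S then \<sigma> a else \<phi> a)"
  shows "(\<theta> permutes {1..n} \<longleftrightarrow> (inv \<phi> \<circ> \<sigma>) ` S \<subseteq> S)
    \<and> (\<theta> permutes {1..n} \<longrightarrow>
         perm_restrict \<theta> S = perm_restrict \<phi> S \<circ> perm_restrict (inv \<phi> \<circ> \<sigma>) S)"
proof -
  have iff: "\<theta> permutes {1..n} \<longleftrightarrow> (inv \<phi> \<circ> \<sigma>) ` S \<subseteq> S"
    unfolding \<theta>_def using piecewise_permutes_iff[OF _ assms(1-3)] by simp
  have "permutation \<phi>"
    using assms(2) permutation_permutes by blast
  with iff show ?thesis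
    unfolding \<theta>_def using perm_restrict_piecewise by blast
qed

end
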